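(* Let $f \in L^2(0,L)$ and $\beta \in \mathbb{R}$. Let $u_0 \in V$ satisfy $a_0(u_0,v) = \int_0^L f v\,dx - \beta v(L)$ for all $v \in V$, and for $n = 1,2,\dots,m$ let $u_n \in V$ satisfy $$a_0(u_n,v) + \sum_{j=1}^{n} a_j(u_{n-j}, v) = 0 \quad \text{for all } v \in V.$$ Then for every $m \ge 1$, $$a_0(u_m, v) = (-1)^m a_m(u_0, v) \quad \text{for all } v \in V.$$
   Context: Let $L>0$ and let $\kappa:(0,L)\to\mathbb{R}$ be measurable with $0<\kappa_{\min}\le \kappa(x)\le \kappa_{\max}$ for a.e. $x$; set $\psi = \log \kappa \in L^\infty(0,L)$. $V = \{ v \in H^1(0,L) : v(0) = 0\}$. For integers $j \ge 0$ and $u,v \in V$, define $a_j(u,v) = \frac{1}{j!}\int_0^L \psi(x)^j\, u'(x)\, v'(x)\,dx$. *)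

theory Defs
  imports "HOL-Analysis.Analysis"
begin

text \<open>g is a weak derivative (in L^2(0,L)) of v, with v(0)=0 built in:
  v is the (continuous) primitive v(x) = integral of g over [0,x] on [0,L].
  Such v are exactly the continuous representatives of elements of
  V = {v in H^1(0,L) : v(0) = 0}.\<close>
definition is_wderiv :: "real \<Rightarrow> (real \<Rightarrow> real) \<Rightarrow> (real \<Rightarrow> real) \<Rightarrow> bool" where
  "is_wderiv L v g \<longleftrightarrow>
     g \<in> borel_measurable lborel \<and>
     set_integrable lborel {0<..<L} (\<lambda>x. (g x)^2) \<and>
     (\<forall>x\<in>{0..L}. v x = (LBINT t=0..x. g t))"

definition inV :: "real \<Rightarrow> (real \<Rightarrow> real) \<Rightarrow> bool" where
  "inV L v \<longleftrightarrow> (\<exists>g. is_wderiv L v g)"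

definition wderiv :: "real \<Rightarrow> (real \<Rightarrow> real) \<Rightarrow> real \<Rightarrow> real" where
  "wderiv L v = (SOME g. is_wderiv L v g)"

definition a_form :: "real \<Rightarrow> (real \<Rightarrow> real) \<Rightarrow> nat \<Rightarrow> (real \<Rightarrow> real) \<Rightarrow> (real \<Rightarrow> real) \<Rightarrow> real" where
  "a_form L \<psi> j u v =
     (1 / fact j) * (LINT x:{0<..<L}|lborel. (\<psi> x)^j * wderiv L u x * wderiv L v x)"

end

theory Submission
  imports Defs
begin

(* The weights can be moved onto the test function. For v in V and bounded psi, the primitive
   v_j of psi^j v' / j! lies in V again, and its weak derivative is psi^j v' / j! almost
   everywhere (weak derivatives are unique, as their integrals over all half-lines agree). Hence
   a_j(w, v) = a_0(w, v_j) and a_k(w, v_j) = binomial (k + j) j * a_(k+j)(w, v). Testing the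
   recursion with v and using the induction hypothesis for u_(n-j) against v_j gives
   a_0(u_n, v) = - (sum j=1..n. (-1)^(n-j) * binomial n j) * a_n(u_0, v) = (-1)^n a_n(u_0, v). *)

lemma AE_eq_0_if_set_integral_greaterThan_eq_0:
  fixes d :: "real \<Rightarrow> real"
  assumes d: "integrable lborel d" and zero: "\<And>a. (LINT x:{a<..}|lborel. d x) = 0"
  shows "AE x in lborel. d x = 0"
proof -
  have [measurable]: "d \<in> borel_measurable lborel" using d by simp
  have positive_part_int: "set_integrable lborel {a<..} (\<lambda>x. max 0 (f x))"
    if "integrable lborel f" for f :: "real \<Rightarrow> real" and a :: real
    using that integrable_mult_indicator[of "{a<..}" lborel "\<lambda>x. max 0 (f x)"]
    unfolding set_integrable_def by auto
  have emeasure_density_eq: "emeasure (density lborel (\<lambda>x. ennreal (f x))) {a<..}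
      = ennreal (LINT x:{a<..}|lborel. max 0 (f x))"
    if "integrable lborel f" for f :: "real \<Rightarrow> real" and a :: real
    using that positive_part_int[OF that, of a] unfolding set_lebesgue_integral_def set_integrable_def
    by (subst emeasure_density, measurable, subst nn_integral_eq_integral[symmetric])
       (auto intro!: nn_integral_cong simp: ennreal_max_0 split: split_indicator)
  have "(LINT x:{a<..}|lborel. max 0 (d x)) = (LINT x:{a<..}|lborel. max 0 (- d x))" for a
  proof -
    have "(LINT x:{a<..}|lborel. max 0 (d x)) - (LINT x:{a<..}|lborel. max 0 (- d x))
        = (LINT x:{a<..}|lborel. d x)"
      unfolding set_integral_diff(2)[OF positive_part_int[OF d] positive_part_int[of "\<lambda>x. - d x"],
        symmetric, OF integrable_minus[OF d]]
      by (rule arg_cong[where f="set_lebesgue_integral lborel {a<..}"]) (auto simp: max_def)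
    then show ?thesis using zero[of a] by simp
  qed
  then have "density lborel (\<lambda>x. ennreal (d x)) = density lborel (\<lambda>x. ennreal (- d x))"
    using d by (intro measure_eqI_lessThan) (auto simp: emeasure_density_eq)
  then have "AE x in lborel. ennreal (d x) = ennreal (- d x)"
    by (intro sigma_finite_measure.density_unique[OF sigma_finite_lborel]) auto
  then show ?thesis
    by eventually_elim
      (metis ennreal_eq_0_iff ennreal_neg linorder_not_le neg_0_less_iff_less order.strict_iff_order)
qed

lemma set_integrable_of_square_integrable_Ioo:
  fixes g :: "real \<Rightarrow> real"
  assumes [measurable]: "g \<in> borel_measurable lborel"
    and g2: "set_integrable lborel {a<..<b} (\<lambda>x. (g x)^2)"
  shows "set_integrable lborel {a<..<b} g"
  unfolding set_integrable_def
proof (rule Bochner_Integration.integrable_bound)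
  have "set_integrable lborel {a<..<b} (\<lambda>_. 1::real)"
    by (cases "a \<le> b") (auto simp: set_integrable_def integrable_indicator_iff)
  then have "set_integrable lborel {a<..<b} (\<lambda>x. 1 + (g x)^2)"
    using g2 by (rule set_integral_add)
  then show "integrable lborel (\<lambda>x. indicator {a<..<b} x *\<^sub>R (1 + (g x)^2))"
    unfolding set_integrable_def .
  have "\<bar>y\<bar> \<le> 1 + y^2" for y :: real
    using zero_le_power2[of "\<bar>y\<bar> - 1"] by (simp add: power2_diff)
  then show "AE x in lborel.
      norm (indicator {a<..<b} x *\<^sub>R g x) \<le> norm (indicator {a<..<b} x *\<^sub>R (1 + (g x)^2))"
    by (auto split: split_indicator)
qed measurable

lemma set_integrable_square_bounded_mult:
  fixes w g :: "real \<Rightarrow> real"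
  assumes [measurable]: "w \<in> borel_measurable lborel" "g \<in> borel_measurable lborel" "A \<in> sets lborel"
    and w_bounded: "AE x in lborel. x \<in> A \<longrightarrow> \<bar>w x\<bar> \<le> C"
    and g2: "set_integrable lborel A (\<lambda>x. (g x)^2)"
  shows "set_integrable lborel A (\<lambda>x. (w x * g x)^2)"
  unfolding set_integrable_def
proof (rule Bochner_Integration.integrable_bound)
  show "integrable lborel (\<lambda>x. indicator A x *\<^sub>R (C^2 * (g x)^2))"
    using set_integrable_mult_right[OF g2, of "C^2"] unfolding set_integrable_def .
  show "AE x in lborel.
      norm (indicator A x *\<^sub>R (w x * g x)^2) \<le> norm (indicator A x *\<^sub>R (C^2 * (g x)^2))"
    using w_bounded
  proof eventually_elim
    case (elim x)
    have "x \<in> A \<Longrightarrow> (w x)^2 \<le> C^2"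
      using elim by (metis abs_le_square_iff abs_of_nonneg abs_ge_zero order_trans)
    then show ?case
      by (auto simp: power_mult_distrib intro: mult_right_mono split: split_indicator)
  qed
qed measurable

lemma wderiv_is_wderiv:
  assumes "inV L v"
  shows "is_wderiv L v (wderiv L v)"
  using assms unfolding inV_def wderiv_def by (rule someI_ex)

lemma is_wderiv_unique:
  assumes g1: "is_wderiv L v g1" and g2: "is_wderiv L v g2"
  shows "AE x in lborel. x \<in> {0<..<L} \<longrightarrow> g1 x = g2 x"
proof (cases "0 \<le> L")
  case True
  have L1: "set_integrable lborel {0<..<L} g" if "is_wderiv L v g" for g
    using that set_integrable_of_square_integrable_Ioo[of g 0 L] by (auto simp: is_wderiv_def)
  have tail_int: "set_integrable lborel {a<..} (\<lambda>x. indicator {0<..<L} x * g x)"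
    if "is_wderiv L v g" for g a
    using L1[OF that] integrable_mult_indicator[of "{a<..}" lborel "\<lambda>x. indicator {0<..<L} x * g x"]
    by (simp add: set_integrable_def)
  have tail_integral: "(LINT x:{a<..}|lborel. indicator {0<..<L} x * g x) = v L - v (min L (max 0 a))"
    if g: "is_wderiv L v g" for g a
  proof -
    define b where "b = min L (max 0 a)"
    have b: "0 \<le> b" "b \<le> L" using True by (auto simp: b_def)
    have "{a<..} \<inter> {0<..<L} = {b<..<L}"
      using True by (auto simp: b_def)
    then have ind: "indicator {a<..} x * indicator {0<..<L} x = (indicator {b<..<L} x :: real)" for x
      by (simp flip: indicator_inter_arith)
    have "(LINT x:{a<..}|lborel. indicator {0<..<L} x * g x) = (LINT x:{b<..<L}|lborel. g x)"
      unfolding set_lebesgue_integral_def by (simp only: real_scaleR_def mult.assoc[symmetric] ind)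
    also have "\<dots> = (LBINT x=b..L. g x)"
      using b by (simp add: interval_integral_Ioo)
    also have "\<dots> = (LBINT x=0..L. g x) - (LBINT x=0..b. g x)"
      using interval_integral_sum[of 0 b L g] L1[OF g] b
      by (simp add: min_def max_def interval_lebesgue_integrable_def zero_ereal_def)
    also have "\<dots> = v L - v b"
      using g b True by (simp add: is_wderiv_def)
    finally show ?thesis unfolding b_def .
  qed
  define d where "d x = indicator {0<..<L} x * g1 x - indicator {0<..<L} x * g2 x" for x
  have "integrable lborel d"
    using set_integral_diff(1)[OF L1[OF g1] L1[OF g2]]
    unfolding d_def[abs_def] by (simp add: set_integrable_def right_diff_distrib)
  moreover have "(LINT x:{a<..}|lborel. d x) = 0" for a
    unfolding d_def set_integral_diff(2)[OF tail_int[OF g1] tail_int[OF g2]]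
    by (simp add: tail_integral[OF g1] tail_integral[OF g2])
  ultimately have "AE x in lborel. d x = 0"
    by (rule AE_eq_0_if_set_integral_greaterThan_eq_0)
  then show ?thesis
    by eventually_elim (auto simp: d_def)
qed simp

definition weighted_primitive :: "real \<Rightarrow> (real \<Rightarrow> real) \<Rightarrow> (real \<Rightarrow> real) \<Rightarrow> real \<Rightarrow> real" where
  "weighted_primitive L w v x = (LBINT t=0..x. w t * wderiv L v t)"

lemma is_wderiv_weighted_primitive:
  assumes v: "inV L v" and [measurable]: "w \<in> borel_measurable lborel"
    and w_bounded: "AE x in lborel. x \<in> {0<..<L} \<longrightarrow> \<bar>w x\<bar> \<le> C"
  shows "is_wderiv L (weighted_primitive L w v) (\<lambda>x. w x * wderiv L v x)"
  using wderiv_is_wderiv[OF v] set_integrable_square_bounded_mult[OF _ _ _ w_bounded]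
  unfolding is_wderiv_def weighted_primitive_def by auto

lemma inV_weighted_primitive:
  assumes "inV L v" "w \<in> borel_measurable lborel"
    and "AE x in lborel. x \<in> {0<..<L} \<longrightarrow> \<bar>w x\<bar> \<le> C"
  shows "inV L (weighted_primitive L w v)"
  using is_wderiv_weighted_primitive[OF assms] unfolding inV_def by blast

lemma a_form_weighted_primitive:
  assumes [measurable]: "\<psi> \<in> borel_measurable lborel" "w \<in> borel_measurable lborel"
    and w_bounded: "AE x in lborel. x \<in> {0<..<L} \<longrightarrow> \<bar>w x\<bar> \<le> C"
    and u: "inV L u" and v: "inV L v"
  shows "a_form L \<psi> k u (weighted_primitive L w v)
    = (1 / fact k) * (LINT x:{0<..<L}|lborel. \<psi> x ^ k * w x * wderiv L u x * wderiv L v x)"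
proof -
  have wv: "is_wderiv L (weighted_primitive L w v) (\<lambda>x. w x * wderiv L v x)"
    using is_wderiv_weighted_primitive[OF v _ w_bounded] by simp
  have [measurable]: "wderiv L u \<in> borel_measurable lborel" "wderiv L v \<in> borel_measurable lborel"
    "wderiv L (weighted_primitive L w v) \<in> borel_measurable lborel"
    using wderiv_is_wderiv[OF u] wderiv_is_wderiv[OF v] wderiv_is_wderiv[of L "weighted_primitive L w v"] wv
    by (auto simp: is_wderiv_def inV_def)
  have ae: "AE x in lborel. x \<in> {0<..<L} \<longrightarrow>
      wderiv L (weighted_primitive L w v) x = w x * wderiv L v x"
    using is_wderiv_unique[OF wderiv_is_wderiv wv] wv unfolding inV_def by blast
  have "(LINT x:{0<..<L}|lborel. \<psi> x ^ k * wderiv L u x * wderiv L (weighted_primitive L w v) x)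
      = (LINT x:{0<..<L}|lborel. \<psi> x ^ k * w x * wderiv L u x * wderiv L v x)"
  proof (rule set_lebesgue_integral_cong_AE)
    show "AE x\<in>{0<..<L} in lborel. \<psi> x ^ k * wderiv L u x * wderiv L (weighted_primitive L w v) x
        = \<psi> x ^ k * w x * wderiv L u x * wderiv L v x"
      using ae by eventually_elim (simp add: mult_ac)
  qed measurable
  then show ?thesis
    unfolding a_form_def by (simp only:)
qed

lemma AE_abs_power_div_fact_le:
  fixes f :: "'a \<Rightarrow> real"
  assumes "AE x in M. P x \<longrightarrow> \<bar>f x\<bar> \<le> C"
  shows "AE x in M. P x \<longrightarrow> \<bar>f x ^ j / fact j\<bar> \<le> C ^ j"
  using assms
proof eventually_elim
  case (elim x)
  show ?case
  proof
    assume "P x"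
    then have "\<bar>f x\<bar> ^ j \<le> C ^ j" using elim by (intro power_mono) auto
    moreover have "\<bar>f x ^ j / fact j\<bar> \<le> \<bar>f x\<bar> ^ j"
      by (simp add: abs_divide power_abs divide_le_eq mult_le_cancel_left1 fact_ge_1)
    ultimately show "\<bar>f x ^ j / fact j\<bar> \<le> C ^ j" by linarith
  qed
qed

lemma a_form_weighted_primitive_power:
  assumes [measurable]: "\<psi> \<in> borel_measurable lborel"
    and \<psi>_bounded: "AE x in lborel. x \<in> {0<..<L} \<longrightarrow> \<bar>\<psi> x\<bar> \<le> C"
    and u: "inV L u" and v: "inV L v"
  shows "a_form L \<psi> k u (weighted_primitive L (\<lambda>x. \<psi> x ^ j / fact j) v)
    = real ((k + j) choose j) * a_form L \<psi> (k + j) u v"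
proof -
  have "a_form L \<psi> k u (weighted_primitive L (\<lambda>x. \<psi> x ^ j / fact j) v)
      = (1 / fact k) * (LINT x:{0<..<L}|lborel.
          (1 / fact j) * (\<psi> x ^ (k + j) * wderiv L u x * wderiv L v x))"
    by (simp add: a_form_weighted_primitive[OF _ _ AE_abs_power_div_fact_le[OF \<psi>_bounded] u v]
        power_add mult_ac)
  also have "\<dots> = real ((k + j) choose j) * a_form L \<psi> (k + j) u v"
    using binomial_fact[of j "k + j", where 'a = real] by (simp add: a_form_def field_simps)
  finally show ?thesis .
qed

lemma alternating_binomial_sum_from_1:
  assumes "1 \<le> n"
  shows "(\<Sum>j=1..n. (-1) ^ (n - j) * real (n choose j)) = - ((-1) ^ n)"
proof -
  have "0 = (\<Sum>j\<le>n. real (n choose j) * 1 ^ j * (-1) ^ (n - j))"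
    using binomial_ring[of "1::real" "-1" n] assms by (simp add: power_0_left)
  also have "\<dots> = (-1) ^ n + (\<Sum>j=1..n. (-1) ^ (n - j) * real (n choose j))"
    by (simp add: atMost_atLeast0 sum.atLeast_Suc_atMost mult.commute)
  finally show ?thesis by linarith
qed

lemma a_form_recursion_closed_form:
  fixes \<psi> :: "real \<Rightarrow> real" and u :: "nat \<Rightarrow> real \<Rightarrow> real"
  assumes [measurable]: "\<psi> \<in> borel_measurable lborel"
    and \<psi>_bounded: "AE x in lborel. x \<in> {0<..<L} \<longrightarrow> \<bar>\<psi> x\<bar> \<le> C"
    and u_V: "\<And>n. n \<le> m \<Longrightarrow> inV L (u n)"
    and recursion: "\<And>n v. 1 \<le> n \<Longrightarrow> n \<le> m \<Longrightarrow> inV L v \<Longrightarrow>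
        a_form L \<psi> 0 (u n) v + (\<Sum>j=1..n. a_form L \<psi> j (u (n - j)) v) = 0"
  shows "n \<le> m \<Longrightarrow> inV L v \<Longrightarrow> a_form L \<psi> 0 (u n) v = (-1) ^ n * a_form L \<psi> n (u 0) v"
proof (induction n arbitrary: v rule: less_induct)
  case (less n)
  show ?case
  proof (cases "n = 0")
    case False
    define test where "test j = weighted_primitive L (\<lambda>x. \<psi> x ^ j / fact j) v" for j
    have test_V: "inV L (test j)" for j
      unfolding test_def
      by (rule inV_weighted_primitive[OF less.prems(2) _ AE_abs_power_div_fact_le[OF \<psi>_bounded]]) simp
    have "a_form L \<psi> 0 (u n) v = - (\<Sum>j=1..n. a_form L \<psi> j (u (n - j)) v)"
      using recursion[of n v] False less.prems by (simp add: eq_neg_iff_add_eq_0)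
    also have "\<dots> = - (\<Sum>j=1..n. a_form L \<psi> 0 (u (n - j)) (test j))"
      using a_form_weighted_primitive_power[OF _ \<psi>_bounded u_V less.prems(2), of _ 0] less.prems
      by (simp add: test_def)
    also have "\<dots> = - (\<Sum>j=1..n. (-1) ^ (n - j) * a_form L \<psi> (n - j) (u 0) (test j))"
      using less.IH less.prems test_V by (intro arg_cong[where f=uminus] sum.cong) auto
    also have "\<dots> = - (\<Sum>j=1..n. (-1) ^ (n - j) * real (n choose j)) * a_form L \<psi> n (u 0) v"
    proof -
      have "a_form L \<psi> (n - j) (u 0) (test j) = real (n choose j) * a_form L \<psi> n (u 0) v"
        if "j \<in> {1..n}" for j
        using a_form_weighted_primitive_power[OF _ \<psi>_bounded u_V less.prems(2), of 0 "n - j" j] that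
        by (simp add: test_def)
      then have "(\<Sum>j=1..n. (-1) ^ (n - j) * a_form L \<psi> (n - j) (u 0) (test j))
          = (\<Sum>j=1..n. (-1) ^ (n - j) * real (n choose j) * a_form L \<psi> n (u 0) v)"
        by (intro sum.cong) auto
      then show ?thesis by (simp add: sum_distrib_right)
    qed
    also have "\<dots> = (-1) ^ n * a_form L \<psi> n (u 0) v"
      using alternating_binomial_sum_from_1[of n] False by simp
    finally show ?thesis .
  qed simp
qed

theorem lemma4:
  fixes L \<kappa>min \<kappa>max \<beta> :: real
    and \<kappa> f :: "real \<Rightarrow> real"
    and u :: "nat \<Rightarrow> real \<Rightarrow> real"
    and m :: nat
  assumes L_pos: "L > 0"
    and \<kappa>_meas: "\<kappa> \<in> borel_measurable lborel"
    and \<kappa>min_pos: "0 < \<kappa>min"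
    and \<kappa>_bounds: "AE x in lborel. x \<in> {0<..<L} \<longrightarrow> \<kappa>min \<le> \<kappa> x \<and> \<kappa> x \<le> \<kappa>max"
    and f_meas: "f \<in> borel_measurable lborel"
    and f_L2: "set_integrable lborel {0<..<L} (\<lambda>x. (f x)^2)"
    and m_ge1: "m \<ge> 1"
    and u_V: "\<And>n. n \<le> m \<Longrightarrow> inV L (u n)"
    and u0_eq: "\<And>v. inV L v \<Longrightarrow>
        a_form L (\<lambda>x. ln (\<kappa> x)) 0 (u 0) v = (LINT x:{0<..<L}|lborel. f x * v x) - \<beta> * v L"
    and un_eq: "\<And>n v. 1 \<le> n \<Longrightarrow> n \<le> m \<Longrightarrow> inV L v \<Longrightarrow>
        a_form L (\<lambda>x. ln (\<kappa> x)) 0 (u n) v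
          + (\<Sum>j=1..n. a_form L (\<lambda>x. ln (\<kappa> x)) j (u (n - j)) v) = 0"
  shows "\<forall>v. inV L v \<longrightarrow>
    a_form L (\<lambda>x. ln (\<kappa> x)) 0 (u m) v = (-1)^m * a_form L (\<lambda>x. ln (\<kappa> x)) m (u 0) v"
proof -
  have ln_\<kappa>_bounded: "AE x in lborel. x \<in> {0<..<L} \<longrightarrow> \<bar>ln (\<kappa> x)\<bar> \<le> max \<bar>ln \<kappa>min\<bar> \<bar>ln \<kappa>max\<bar>"
    using \<kappa>_bounds
  proof eventually_elim
    case (elim x)
    show ?case
    proof
      assume "x \<in> {0<..<L}"
      then have "\<kappa>min \<le> \<kappa> x" "\<kappa> x \<le> \<kappa>max" using elim by auto
      then have "ln \<kappa>min \<le> ln (\<kappa> x)" "ln (\<kappa> x) \<le> ln \<kappa>max"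
        using \<kappa>min_pos by simp_all
      then show "\<bar>ln (\<kappa> x)\<bar> \<le> max \<bar>ln \<kappa>min\<bar> \<bar>ln \<kappa>max\<bar>" by linarith
    qed
  qed
  have "(\<lambda>x. ln (\<kappa> x)) \<in> borel_measurable lborel"
    using \<kappa>_meas by measurable
  then show ?thesis
    using a_form_recursion_closed_form[OF _ ln_\<kappa>_bounded u_V un_eq order_refl] by blast
qed

end
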